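(* Let $N=2n+1$ and let $(\mathcal X'_k)_{0\le k\le n}$ be the skeleton chain of the ternary coalescent started from $N$ particles of mass $1$. Let $0\le l\le n$ and $\mathbf s=(s_1,\dots,s_{N-2l})\in\mathcal S^\downarrow$ with every $s_i$ an odd positive integer and $s_1+\dots+s_{N-2l}=N$. Then $$\mathbb P(\mathcal X'_l=\mathbf s)=\gamma(\mathbf s)\,\frac{N}{N-2l}\binom{N}{l}^{-1}\prod_{i=1}^{N-2l}\frac1{s_i}\binom{s_i}{\frac{s_i+1}{2}}.$$
   Context: $\mathcal S^\downarrow$ is the set of nonincreasing sequences $s_1\ge s_2\ge\dots\ge0$ with finitely many nonzero terms, identified with their nonzero entries. The ternary coalescent is the continuous-time Markov jump process on $\mathcal S^\downarrow$ in which each triple of distinct particles with masses $a,b,c$ merges into one particle of mass $a+b+c$ at rate $a+b+c+3$; with $T_0=0$ and $T_k$ the $k$-th coagulation time, the skeleton chain is $\mathcal X'_k=\mathcal X(T_k)$. For $\mathbf s=(s_1,\dots,s_m)$ with nonzero entries, if $s_{l_1},\dots,s_{l_p}$ are its distinct values with multiplicities $k_1,\dots,k_p$, then $\gamma(\mathbf s)=\binom{m}{k_1,\dots,k_p}$ (the number of distinct $m$-tuples formed from the entries). *)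

theory Defs
  imports "HOL-Probability.Probability" "HOL-Library.Multiset"
begin

text \<open>States of the coalescent: finite multisets of positive masses (the nonzero
entries of an element of S-down). Particles are distinguishable; we index them
by positions in the sorted list of the multiset.\<close>

definition index_triples :: "nat \<Rightarrow> (nat \<times> nat \<times> nat) set" where
  "index_triples m = {(i, j, k). i < j \<and> j < k \<and> k < m}"

definition triple_rate :: "nat list \<Rightarrow> nat \<times> nat \<times> nat \<Rightarrow> nat" where
  "triple_rate xs t = (case t of (i, j, k) \<Rightarrow> xs ! i + xs ! j + xs ! k + 3)"

definition merge_triple :: "nat list \<Rightarrow> nat \<times> nat \<times> nat \<Rightarrow> nat multiset" where
  "merge_triple xs t = (case t of (i, j, k) \<Rightarrow>
      mset xs - {# xs ! i, xs ! j, xs ! k #} + {# xs ! i + xs ! j + xs ! k #})"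

text \<open>One step of the skeleton chain: the triple that merges is chosen with
probability proportional to its rate a+b+c+3 (rates are natural numbers, so a
weighted multiset of triples gives the jump distribution).\<close>

definition ternary_step :: "nat multiset \<Rightarrow> nat multiset pmf" where
  "ternary_step M =
     (if size M < 3 then return_pmf M
      else (let xs = sorted_list_of_multiset M in
            map_pmf (merge_triple xs)
              (pmf_of_multiset
                 (\<Sum>t\<in>index_triples (length xs). replicate_mset (triple_rate xs t) t))))"

primrec skeleton_chain :: "nat \<Rightarrow> nat \<Rightarrow> nat multiset pmf" where
  "skeleton_chain N 0 = return_pmf (replicate_mset N 1)"
| "skeleton_chain N (Suc k) = bind_pmf (skeleton_chain N k) ternary_step"

definition gamma_coef :: "nat list \<Rightarrow> real" where
  "gamma_coef s = fact (length s) / (\<Prod>v\<in>set s. fact (count_list s v))"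

end

theory Submission
  imports Defs "HOL-Combinatorics.Permutations" "HOL-Combinatorics.Multiset_Permutations"
begin

text \<open>
  Let w(s) = (1/s) (s choose (s+1)/2) for odd s, which is the Catalan number C_{(s-1)/2}, and
  w(s) = 0 for even s (catalan_weight). By induction on l, P(X'_l = M) is N/((N-2l) (N choose l)) times the sum,
  over all orderings u of M, of w(u_1) ... w(u_m); for M = s there are gamma(s) orderings. Summed
  against these weights, the rate of a jump does not depend on which positions merge, so the last
  three blocks may be taken to merge. The identity (x+3) \<Sigma>_{a+b+c=x} w(a) w(b) w(c) = 3(x-1) w(x)
  then absorbs the merge, and averaging over the position of the new block turns 3(x-1) into
  3(N-m+2)/(m-2), as the masses sum to N. The total jump rate (m-1)(m-2)(m+N)/2 depends only on
  the number m of blocks, and the prefactors satisfy the resulting recursion.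
\<close>

definition catalan_weight :: "nat \<Rightarrow> real" where
  "catalan_weight x = (if odd x then real (x choose ((x + 1) div 2)) / real x else 0)"

lemma catalan_weight_even: "even x \<Longrightarrow> catalan_weight x = 0"
  by (simp add: catalan_weight_def)

lemma catalan_weight_1 [simp]: "catalan_weight (Suc 0) = 1"
  by (simp add: catalan_weight_def)

lemma catalan_weight_odd: "catalan_weight (2 * k + 1) = fact (2 * k) / (fact k * fact (Suc k))"
proof -
  have "catalan_weight (2 * k + 1) = real ((2 * k + 1) choose Suc k) / real (2 * k + 1)"
    by (simp add: catalan_weight_def del: binomial_Suc_Suc)
  also have "real ((2 * k + 1) choose Suc k) = fact (2 * k + 1) / (fact (Suc k) * fact k)"
    by (subst binomial_fact) auto
  also have "(fact (2 * k + 1) :: real) = real (2 * k + 1) * fact (2 * k)"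
    by simp
  finally show ?thesis
    by (simp add: field_simps del: of_nat_Suc)
qed

lemma catalan_weight_Suc:
  "(real k + 2) * catalan_weight (2 * k + 3) = (4 * real k + 2) * catalan_weight (2 * k + 1)"
proof -
  have "catalan_weight (2 * k + 3) = fact (2 * k + 2) / (fact (Suc k) * fact (Suc (Suc k)))"
    using catalan_weight_odd[of "Suc k"] by (simp add: numeral_eq_Suc)
  also have "(fact (2 * k + 2) :: real) = (2 * real k + 2) * (2 * real k + 1) * fact (2 * k)"
    by (simp add: numeral_eq_Suc algebra_simps)
  also have "(fact (Suc (Suc k)) :: real) = (real k + 2) * (real k + 1) * fact k"
    by (simp add: algebra_simps)
  finally have eq: "catalan_weight (2 * k + 3)
      = (2 * real k + 2) * (2 * real k + 1) * fact (2 * k) / ((real k + 1) * fact k * ((real k + 2) * (real k + 1) * fact k))"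
    by simp
  have "real k + 1 \<noteq> 0" "real k + 2 \<noteq> 0" "(fact k :: real) \<noteq> 0"
    by linarith+ simp
  then show ?thesis
    unfolding eq catalan_weight_odd by (simp add: divide_simps) algebra
qed

text \<open>The Taylor coefficients of sqrt(1 - 4z). Their self-convolution, the coefficients of 1 - 4z,
  vanishes beyond degree 1; this is the Catalan recursion.\<close>

definition sqrt_coeff :: "nat \<Rightarrow> real" where
  "sqrt_coeff k = ((1/2) gchoose k) * (-4) ^ k"

lemma sqrt_coeff_Suc: "real (Suc k) * sqrt_coeff (Suc k) = (4 * real k - 2) * sqrt_coeff k"
proof -
  have binom: "real (Suc k) * ((1/2) gchoose Suc k) = (1/2 - real k) * ((1/2 :: real) gchoose k)"
    using gbinomial_mult_1[of "1/2::real" k] by (simp add: algebra_simps)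
  have "real (Suc k) * sqrt_coeff (Suc k) = (real (Suc k) * ((1/2) gchoose Suc k)) * (-4) * (-4) ^ k"
    by (simp add: sqrt_coeff_def mult_ac)
  also have "\<dots> = (1/2 - real k) * (-4) * (((1/2) gchoose k) * (-4) ^ k)"
    unfolding binom by (simp only: mult_ac)
  finally show ?thesis
    by (simp add: sqrt_coeff_def algebra_simps)
qed

lemma catalan_weight_sqrt_coeff: "catalan_weight (2 * k + 1) = - sqrt_coeff (Suc k) / 2"
proof (induction k)
  case 0
  then show ?case by (simp add: sqrt_coeff_def catalan_weight_def)
next
  case (Suc k)
  have "(real k + 2) * (2 * catalan_weight (2 * Suc k + 1))
      = (4 * real k + 2) * (2 * catalan_weight (2 * k + 1))"
    using catalan_weight_Suc[of k] by (simp add: numeral_eq_Suc mult.left_commute)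
  also have "\<dots> = - ((4 * real (Suc k) - 2) * sqrt_coeff (Suc k))"
    using Suc.IH by (simp add: algebra_simps)
  also have "\<dots> = (real k + 2) * (- sqrt_coeff (Suc (Suc k)))"
    using sqrt_coeff_Suc[of "Suc k"] by (simp add: algebra_simps)
  finally have "(real k + 2) * (2 * catalan_weight (2 * Suc k + 1) + sqrt_coeff (Suc (Suc k))) = 0"
    by (simp add: algebra_simps)
  then have "2 * catalan_weight (2 * Suc k + 1) + sqrt_coeff (Suc (Suc k)) = 0"
    by simp
  then show ?case
    by linarith
qed

lemma sqrt_coeff_convolution: "(\<Sum>j\<le>n. sqrt_coeff j * sqrt_coeff (n - j)) = (1 gchoose n) * (-4) ^ n"
proof -
  have "(\<Sum>j\<le>n. sqrt_coeff j * sqrt_coeff (n - j))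
      = (\<Sum>j\<le>n. ((1/2) gchoose j) * ((1/2) gchoose (n - j)) * (-4) ^ n)"
  proof (rule sum.cong [OF refl])
    fix j assume "j \<in> {..n}"
    then have "(-4::real) ^ j * (-4) ^ (n - j) = (-4) ^ n"
      by (simp flip: power_add)
    then show "sqrt_coeff j * sqrt_coeff (n - j) = ((1/2) gchoose j) * ((1/2) gchoose (n - j)) * (-4) ^ n"
      unfolding sqrt_coeff_def by (metis mult.assoc mult.left_commute)
  qed
  also have "\<dots> = (1 gchoose n) * (-4) ^ n"
    using gbinomial_Vandermonde[of "1/2::real" "1/2" n]
    by (simp add: atLeast0AtMost flip: sum_distrib_right)
  finally show ?thesis .
qed

lemma sqrt_coeff_shifted_convolution:
  "(\<Sum>i\<le>k. sqrt_coeff (Suc i) * sqrt_coeff (Suc (k - i))) = - 2 * sqrt_coeff (k + 2)"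
proof -
  have s0: "sqrt_coeff 0 = 1"
    by (simp add: sqrt_coeff_def)
  have "(1 :: real) gchoose (k + 2) = 0"
    using binomial_gbinomial[of 1 "k + 2", where 'a = real] by simp
  then have "0 = (\<Sum>j\<le>Suc (Suc k). sqrt_coeff j * sqrt_coeff (Suc (Suc k) - j))"
    using sqrt_coeff_convolution[of "k + 2"] by (simp add: numeral_eq_Suc)
  also have "\<dots> = sqrt_coeff 0 * sqrt_coeff (Suc (Suc k))
      + ((\<Sum>i\<le>k. sqrt_coeff (Suc i) * sqrt_coeff (Suc (Suc k) - Suc i))
      + sqrt_coeff (Suc (Suc k)) * sqrt_coeff 0)"
    by (subst sum.atMost_Suc_shift, subst sum.atMost_Suc) (simp only: diff_Suc_Suc diff_self_eq_0 diff_zero)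
  also have "\<dots> = sqrt_coeff (k + 2) + (\<Sum>i\<le>k. sqrt_coeff (Suc i) * sqrt_coeff (Suc (k - i))) + sqrt_coeff (k + 2)"
    by (simp add: s0 Suc_diff_le numeral_eq_Suc)
  finally show ?thesis
    by linarith
qed

lemma catalan_weight_convolution:
  "(\<Sum>i\<le>k. catalan_weight (2 * i + 1) * catalan_weight (2 * (k - i) + 1)) = catalan_weight (2 * k + 3)"
proof -
  have "(\<Sum>i\<le>k. catalan_weight (2 * i + 1) * catalan_weight (2 * (k - i) + 1))
      = (\<Sum>i\<le>k. sqrt_coeff (Suc i) * sqrt_coeff (Suc (k - i))) / 4"
    unfolding catalan_weight_sqrt_coeff by (simp add: sum_divide_distrib)
  also have "\<dots> = catalan_weight (2 * k + 3)"
    using catalan_weight_sqrt_coeff[of "Suc k"] by (simp add: sqrt_coeff_shifted_convolution numeral_eq_Suc)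
  finally show ?thesis .
qed

lemma sum_atMost_odd_terms:
  fixes y :: nat
  assumes "\<And>b. even b \<Longrightarrow> g b = 0"
  shows "(\<Sum>b\<le>y. g b) = (\<Sum>i<(y + 1) div 2. g (2 * i + 1))"
proof (induction y)
  case 0
  then show ?case using assms[of 0] by simp
next
  case (Suc y)
  show ?case
  proof (cases "even y")
    case True
    then have "(Suc y + 1) div 2 = Suc ((y + 1) div 2)" "2 * ((y + 1) div 2) + 1 = Suc y"
      by presburger+
    then show ?thesis
      using Suc by simp
  next
    case False
    then have "(Suc y + 1) div 2 = (y + 1) div 2"
      by presburger
    then show ?thesis
      using Suc False assms[of "Suc y"] by simp
  qed
qed

lemma catalan_weight_self_convolution:
  "(\<Sum>b\<le>y. catalan_weight b * catalan_weight (y - b)) = (if even y \<and> 0 < y then catalan_weight (y + 1) else 0)"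
proof (cases "even y \<and> 0 < y")
  case True
  define k where "k = y div 2 - 1"
  have k: "y = 2 * k + 2"
    using True unfolding k_def by (auto elim!: evenE)
  have "(\<Sum>b\<le>y. catalan_weight b * catalan_weight (y - b))
      = (\<Sum>i<Suc k. catalan_weight (2 * i + 1) * catalan_weight (y - (2 * i + 1)))"
    using sum_atMost_odd_terms[of "\<lambda>b. catalan_weight b * catalan_weight (y - b)" y] k
    by (simp add: catalan_weight_even)
  also have "\<dots> = (\<Sum>i\<le>k. catalan_weight (2 * i + 1) * catalan_weight (2 * (k - i) + 1))"
    unfolding lessThan_Suc_atMost using k by (intro sum.cong) (auto simp: diff_mult_distrib2 Suc_diff_le)
  also have "\<dots> = catalan_weight (y + 1)"
    unfolding catalan_weight_convolution using k by (simp add: numeral_eq_Suc)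
  finally show ?thesis
    using True by simp
next
  case False
  have "catalan_weight b * catalan_weight (y - b) = 0" if "b \<le> y" for b
  proof (cases "even b")
    case True
    then show ?thesis by (simp add: catalan_weight_even)
  next
    case odd: False
    then have "even (y - b)"
      using False that by (cases "y = 0") (auto simp: even_diff_nat)
    then show ?thesis by (simp add: catalan_weight_even)
  qed
  then have "(\<Sum>b\<le>y. catalan_weight b * catalan_weight (y - b)) = 0"
    by (intro sum.neutral) auto
  then show ?thesis
    using False by auto
qed

lemma catalan_weight_triple_convolution_odd:
  "(\<Sum>a\<le>2 * K + 1. catalan_weight a * (\<Sum>b\<le>2 * K + 1 - a. catalan_weight b * catalan_weight (2 * K + 1 - a - b)))
    = catalan_weight (2 * K + 3) - catalan_weight (2 * K + 1)"
  (is "?S = _")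
proof -
  have "?S = (\<Sum>i<Suc K. catalan_weight (2 * i + 1)
      * (\<Sum>b\<le>2 * (K - i). catalan_weight b * catalan_weight (2 * (K - i) - b)))"
    using sum_atMost_odd_terms[of "\<lambda>a. catalan_weight a * (\<Sum>b\<le>2 * K + 1 - a. catalan_weight b * catalan_weight (2 * K + 1 - a - b))" "2 * K + 1"]
    by (simp add: catalan_weight_even diff_mult_distrib2)
  also have "\<dots> = (\<Sum>i<Suc K. catalan_weight (2 * i + 1) * (if i < K then catalan_weight (2 * (K - i) + 1) else 0))"
    unfolding catalan_weight_self_convolution by (intro sum.cong refl) auto
  also have "\<dots> = (\<Sum>i<K. catalan_weight (2 * i + 1) * catalan_weight (2 * (K - i) + 1))"
    by simp
  also have "\<dots> = catalan_weight (2 * K + 3) - catalan_weight (2 * K + 1)"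
    using catalan_weight_convolution[of K] by (simp add: lessThan_Suc_atMost [symmetric])
  finally show ?thesis .
qed

text \<open>Since three blocks of total mass x merge at rate x + 3, this is the identity that makes the
  Catalan weights compatible with the coalescent.\<close>

lemma catalan_weight_triple_convolution:
  "(real x + 3) * (\<Sum>a\<le>x. catalan_weight a * (\<Sum>b\<le>x - a. catalan_weight b * catalan_weight (x - a - b)))
     = 3 * (real x - 1) * catalan_weight x"
proof (cases "even x")
  case True
  have "catalan_weight a * (\<Sum>b\<le>x - a. catalan_weight b * catalan_weight (x - a - b)) = 0" for a
    using True catalan_weight_self_convolution[of "x - a"]
    by (cases "even a") (auto simp: catalan_weight_even even_diff_nat)
  then have "(\<Sum>a\<le>x. catalan_weight a * (\<Sum>b\<le>x - a. catalan_weight b * catalan_weight (x - a - b))) = 0"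
    by (intro sum.neutral) blast
  then show ?thesis
    using True by (simp add: catalan_weight_even)
next
  case False
  then obtain K where K: "x = 2 * K + 1"
    by (blast elim: oddE)
  have "(real x + 3) * (catalan_weight (2 * K + 3) - catalan_weight (2 * K + 1))
      = 2 * ((real K + 2) * catalan_weight (2 * K + 3)) - 2 * (real K + 2) * catalan_weight (2 * K + 1)"
    using K by (simp add: algebra_simps)
  also have "\<dots> = 3 * (real x - 1) * catalan_weight x"
    unfolding catalan_weight_Suc using K by (simp add: algebra_simps)
  finally show ?thesis
    unfolding K catalan_weight_triple_convolution_odd .
qed

definition index_pairs :: "nat \<Rightarrow> (nat \<times> nat) set" where
  "index_pairs m = {(i, j). i < j \<and> j < m}"

lemma finite_index_pairs [simp]: "finite (index_pairs m)"
  by (rule finite_subset [of _ "{..<m} \<times> {..<m}"]) (auto simp: index_pairs_def)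

lemma finite_index_triples [simp]: "finite (index_triples m)"
  by (rule finite_subset [of _ "{..<m} \<times> {..<m} \<times> {..<m}"]) (auto simp: index_triples_def)

lemma index_pairs_Suc: "index_pairs (Suc m) = index_pairs m \<union> (\<lambda>i. (i, m)) ` {..<m}"
  by (auto simp: index_pairs_def)

lemma index_triples_Suc:
  "index_triples (Suc m) = index_triples m \<union> (\<lambda>(i, j). (i, j, m)) ` index_pairs m"
  by (auto simp: index_pairs_def index_triples_def image_iff less_Suc_eq)

lemma sum_index_pairs:
  fixes g :: "nat \<Rightarrow> real"
  shows "(\<Sum>(i, j)\<in>index_pairs m. c + g i + g j)
    = c * real m * (real m - 1) / 2 + (real m - 1) * (\<Sum>i<m. g i)"
proof (induction m)
  case 0
  then show ?case by (simp add: index_pairs_def)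
next
  case (Suc m)
  have "(\<Sum>(i, j)\<in>index_pairs (Suc m). c + g i + g j)
      = (\<Sum>(i, j)\<in>index_pairs m. c + g i + g j) + (\<Sum>i<m. c + g i + g m)"
  proof -
    have "index_pairs m \<inter> (\<lambda>i. (i, m)) ` {..<m} = {}"
      by (auto simp: index_pairs_def)
    then show ?thesis
      unfolding index_pairs_Suc by (simp add: sum.union_disjoint sum.reindex inj_on_def)
  qed
  also have "(\<Sum>i<m. c + g i + g m) = real m * (c + g m) + (\<Sum>i<m. g i)"
    by (simp add: sum.distrib algebra_simps)
  finally show ?case
    using Suc by (simp add: field_simps)
qed

lemma sum_index_triples:
  fixes g :: "nat \<Rightarrow> real"
  shows "(\<Sum>(i, j, k)\<in>index_triples m. c + g i + g j + g k)
    = c * real m * (real m - 1) * (real m - 2) / 6 + (real m - 1) * (real m - 2) / 2 * (\<Sum>i<m. g i)"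
proof (induction m)
  case 0
  have "index_triples 0 = {}"
    by (simp add: index_triples_def)
  then show ?case by simp
next
  case (Suc m)
  have "(\<Sum>(i, j, k)\<in>index_triples (Suc m). c + g i + g j + g k)
      = (\<Sum>(i, j, k)\<in>index_triples m. c + g i + g j + g k) + (\<Sum>(i, j)\<in>index_pairs m. (c + g m) + g i + g j)"
  proof -
    have "index_triples m \<inter> (\<lambda>(i, j). (i, j, m)) ` index_pairs m = {}"
      by (auto simp: index_pairs_def index_triples_def)
    moreover have "inj_on (\<lambda>(i, j). (i, j, m)) (index_pairs m)"
      by (auto simp: inj_on_def)
    ultimately show ?thesis
      unfolding index_triples_Suc by (simp add: sum.union_disjoint sum.reindex split_def algebra_simps)
  qed
  then show ?case
    unfolding sum_index_pairs using Suc by (simp add: algebra_simps add_divide_distrib diff_divide_distrib)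
qed

lemma card_index_triples: "real (card (index_triples m)) = real m * (real m - 1) * (real m - 2) / 6"
  using sum_index_triples[of 1 "\<lambda>_. 0" m] by (simp add: split_def)

definition total_rate :: "nat list \<Rightarrow> real" where
  "total_rate xs = (\<Sum>t\<in>index_triples (length xs). real (triple_rate xs t))"

lemma total_rate_eq:
  "total_rate xs = (real (length xs) - 1) * (real (length xs) - 2) * (real (length xs) + real (sum_list xs)) / 2"
proof -
  have "total_rate xs = (\<Sum>(i, j, k)\<in>index_triples (length xs). 3 + real (xs ! i) + real (xs ! j) + real (xs ! k))"
    unfolding total_rate_def triple_rate_def by (intro sum.cong) (auto simp: algebra_simps)
  also have "(\<Sum>i<length xs. real (xs ! i)) = real (sum_list xs)"
    by (simp add: sum_list_sum_nth atLeast0LessThan)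
  ultimately show ?thesis
    unfolding sum_index_triples[of 3 "\<lambda>i. real (xs ! i)"] by (simp add: field_simps)
qed

definition jump_rate :: "nat list \<Rightarrow> nat multiset \<Rightarrow> nat \<times> nat \<times> nat \<Rightarrow> real" where
  "jump_rate xs M' t = (if merge_triple xs t = M' then real (triple_rate xs t) else 0)"

definition transition_rate :: "nat list \<Rightarrow> nat multiset \<Rightarrow> real" where
  "transition_rate xs M' = (\<Sum>t\<in>index_triples (length xs). jump_rate xs M' t)"

lemma pmf_ternary_step:
  assumes "3 \<le> size M"
  shows "pmf (ternary_step M) M'
    = transition_rate (sorted_list_of_multiset M) M' / total_rate (sorted_list_of_multiset M)"
proof -
  define xs where "xs = sorted_list_of_multiset M"
  define W where "W = (\<Sum>t\<in>index_triples (length xs). replicate_mset (triple_rate xs t) t)"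
  have "length xs = size M"
    unfolding xs_def by (metis mset_sorted_list_of_multiset size_mset)
  then have "(0, 1, 2) \<in> index_triples (length xs)"
    using assms by (simp add: index_triples_def)
  have count_W: "count W t = (if t \<in> index_triples (length xs) then triple_rate xs t else 0)" for t
    unfolding W_def count_sum by (simp add: count_replicate_mset)
  have "triple_rate xs t > 0" for t
    by (simp add: triple_rate_def split: prod.splits)
  then have set_W: "set_mset W = index_triples (length xs)"
    by (auto simp: count_W simp flip: count_greater_zero_iff split: if_splits)
  with \<open>(0, 1, 2) \<in> index_triples (length xs)\<close> have "W \<noteq> {#}"
    by auto
  have "pmf (ternary_step M) M' = measure (pmf_of_multiset W) (merge_triple xs -` {M'})"
    unfolding ternary_step_def xs_def W_def using assms by (simp add: Let_def pmf_map)
  also have "\<dots> = measure (pmf_of_multiset W) (merge_triple xs -` {M'} \<inter> index_triples (length xs))"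
    using measure_Int_set_pmf[of "pmf_of_multiset W"] \<open>W \<noteq> {#}\<close> set_W by simp
  also have "merge_triple xs -` {M'} \<inter> index_triples (length xs)
      = {t \<in> index_triples (length xs). merge_triple xs t = M'}"
    by auto
  also have "measure (pmf_of_multiset W) \<dots> = (\<Sum>t\<in>index_triples (length xs). jump_rate xs M' t / real (size W))"
    using \<open>W \<noteq> {#}\<close>
    by (simp add: measure_measure_pmf_finite sum.inter_filter) (intro sum.cong; simp add: count_W jump_rate_def)
  also have "\<dots> = (\<Sum>t\<in>index_triples (length xs). jump_rate xs M' t) / real (size W)"
    by (simp add: sum_divide_distrib)
  also have "real (size W) = total_rate xs"
    unfolding W_def total_rate_def by simp
  finally show ?thesis
    unfolding transition_rate_def xs_def .
qed

definition three_subsets :: "nat \<Rightarrow> nat set set" where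
  "three_subsets m = {S. S \<subseteq> {..<m} \<and> card S = 3}"

lemma bij_betw_index_triples_three_subsets:
  "bij_betw (\<lambda>(i, j, k). {i, j, k}) (index_triples m) (three_subsets m)"
proof (rule bij_betwI')
  have sorted_triple: "sorted_list_of_set {i, j, k} = [i, j, k]" if "i < j" "j < k" for i j k :: nat
    using sorted_list_of_set.idem_if_sorted_distinct[of "[i, j, k]"] that by simp
  fix t t' assume "t \<in> index_triples m" "t' \<in> index_triples m"
  then obtain i j k i' j' k' where t: "t = (i, j, k)" "i < j" "j < k" and t': "t' = (i', j', k')" "i' < j'" "j' < k'"
    by (auto simp: index_triples_def)
  show "((\<lambda>(i, j, k). {i, j, k}) t = (\<lambda>(i, j, k). {i, j, k}) t') = (t = t')"
  proof
    assume "(\<lambda>(i, j, k). {i, j, k}) t = (\<lambda>(i, j, k). {i, j, k}) t'"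
    then have "sorted_list_of_set {i, j, k} = sorted_list_of_set {i', j', k'}"
      using t t' by simp
    then show "t = t'"
      using t t' by (simp only: sorted_triple) simp
  qed simp
next
  fix t assume "t \<in> index_triples m"
  then show "(\<lambda>(i, j, k). {i, j, k}) t \<in> three_subsets m"
    by (auto simp: index_triples_def three_subsets_def)
next
  fix S assume S: "S \<in> three_subsets m"
  then have "finite S"
    by (auto simp: three_subsets_def intro: finite_subset)
  then obtain l where l: "sorted_wrt (<) l" "set l = S" "length l = 3"
    using S sorted_list_of_set.finite_set_strict_sorted[of S] by (auto simp: three_subsets_def)
  then obtain i j k where "l = [i, j, k]"
    by (auto simp: numeral_eq_Suc length_Suc_conv)
  then show "\<exists>t\<in>index_triples m. S = (\<lambda>(i, j, k). {i, j, k}) t"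
    using l S by (auto simp: index_triples_def three_subsets_def intro!: bexI[of _ "(i, j, k)"])
qed

lemma sum_three_subsets_permute:
  assumes p: "p permutes {..<m}"
  shows "(\<Sum>S\<in>three_subsets m. h (p ` S)) = (\<Sum>S\<in>three_subsets m. h S)"
proof (rule sum.reindex_bij_witness[where j = "image p" and i = "image (inv p)"])
  fix S assume S: "S \<in> three_subsets m"
  show "inv p ` p ` S = S"
    using permutes_inj[OF p] by (simp add: image_comp)
  show "p ` S \<in> three_subsets m"
    using S permutes_in_image[OF p] permutes_inj[OF p]
    by (auto simp: three_subsets_def card_image inj_on_subset)
next
  fix S assume S: "S \<in> three_subsets m"
  have p': "inv p permutes {..<m}"
    using permutes_inv[OF p] .
  show "p ` inv p ` S = S"
    using permutes_surj[OF p] by (simp add: image_comp surj_iff_all)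
  show "inv p ` S \<in> three_subsets m"
    using S permutes_in_image[OF p'] permutes_inj[OF p']
    by (auto simp: three_subsets_def card_image inj_on_subset)
qed simp

definition block_merge_rate :: "nat multiset \<Rightarrow> nat multiset \<Rightarrow> nat multiset \<Rightarrow> real" where
  "block_merge_rate M M' B = (if M - B + {#sum_mset B#} = M' then real (sum_mset B + 3) else 0)"

lemma transition_rate_three_subsets:
  "transition_rate xs M'
    = (\<Sum>S\<in>three_subsets (length xs). block_merge_rate (mset xs) M' (image_mset (nth xs) (mset_set S)))"
proof -
  have "transition_rate xs M'
      = (\<Sum>t\<in>index_triples (length xs). block_merge_rate (mset xs) M'
           (image_mset (nth xs) (mset_set ((\<lambda>(i, j, k). {i, j, k}) t))))"
    unfolding transition_rate_def
    by (intro sum.cong)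
      (auto simp: index_triples_def jump_rate_def block_merge_rate_def merge_triple_def triple_rate_def
        algebra_simps)
  also have "\<dots> = (\<Sum>S\<in>three_subsets (length xs). block_merge_rate (mset xs) M' (image_mset (nth xs) (mset_set S)))"
    by (rule sum.reindex_bij_betw[OF bij_betw_index_triples_three_subsets])
  finally show ?thesis .
qed

lemma transition_rate_mset_eq:
  assumes "mset u = mset xs"
  shows "transition_rate u M' = transition_rate xs M'"
proof -
  obtain p where p: "p permutes {..<length xs}" "permute_list p xs = u"
    using mset_eq_permutation[OF assms] by blast
  have "image_mset (nth u) (mset_set S) = image_mset (nth xs) (mset_set (p ` S))"
    if "S \<in> three_subsets (length xs)" for S
  proof -
    have S: "S \<subseteq> {..<length xs}" "finite S"
      using that by (auto simp: three_subsets_def intro: finite_subset)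
    then have "image_mset (nth u) (mset_set S) = image_mset (nth xs) (image_mset p (mset_set S))"
      using p by (auto simp: multiset.map_comp permute_list_nth intro!: image_mset_cong)
    also have "image_mset p (mset_set S) = mset_set (p ` S)"
      using permutes_inj[OF p(1)] by (simp add: image_mset_mset_set inj_on_subset)
    finally show ?thesis .
  qed
  then have "transition_rate u M'
      = (\<Sum>S\<in>three_subsets (length xs). block_merge_rate (mset xs) M' (image_mset (nth xs) (mset_set (p ` S))))"
    unfolding transition_rate_three_subsets using assms by (simp add: mset_eq_length[OF assms])
  also have "\<dots> = transition_rate xs M'"
    unfolding transition_rate_three_subsets by (rule sum_three_subsets_permute[OF p(1)])
  finally show ?thesis .
qed

lemma jump_rate_permute_list:
  assumes "p permutes {..<length u}" "a < length u" "b < length u" "c < length u"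
  shows "jump_rate (permute_list p u) M' (a, b, c) = jump_rate u M' (p a, p b, p c)"
  using assms
  by (simp add: jump_rate_def merge_triple_def triple_rate_def permute_list_nth mset_permute_list)

text \<open>The bound N only makes the set finite: lists of nonzero weight have entries summing to N.\<close>

definition bounded_lists :: "nat \<Rightarrow> nat \<Rightarrow> nat list set" where
  "bounded_lists N m = {u. length u = m \<and> set u \<subseteq> {..N}}"

lemma finite_bounded_lists [simp]: "finite (bounded_lists N m)"
proof -
  have "bounded_lists N m = {u. set u \<subseteq> {..N} \<and> length u = m}"
    by (auto simp: bounded_lists_def)
  then show ?thesis
    using finite_lists_length_eq[of "{..N}" m] by simp
qed

lemma sum_bounded_lists_Suc:
  "(\<Sum>u\<in>bounded_lists N (Suc k). g u) = (\<Sum>v\<in>bounded_lists N k. \<Sum>a\<le>N. g (v @ [a]))"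
proof -
  have "bounded_lists N (Suc k) = (\<lambda>(v, a). v @ [a]) ` (bounded_lists N k \<times> {..N})"
  proof (intro equalityI subsetI)
    fix u assume u: "u \<in> bounded_lists N (Suc k)"
    then have "u \<noteq> []"
      by (auto simp: bounded_lists_def)
    then have "u = butlast u @ [last u]"
      by simp
    moreover have "butlast u \<in> bounded_lists N k"
      using u by (auto simp: bounded_lists_def dest: in_set_butlastD)
    moreover have "last u \<in> {..N}"
      using u \<open>u \<noteq> []\<close> last_in_set[of u] unfolding bounded_lists_def by blast
    ultimately show "u \<in> (\<lambda>(v, a). v @ [a]) ` (bounded_lists N k \<times> {..N})"
      by (metis (no_types, lifting) SigmaI case_prod_conv image_eqI)
  qed (auto simp: bounded_lists_def)
  moreover have "inj_on (\<lambda>(v, a). v @ [a]) (bounded_lists N k \<times> {..N})"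
    by (auto simp: inj_on_def)
  ultimately show ?thesis
    by (simp add: sum.reindex sum.cartesian_product split_def)
qed

lemma sum_bounded_lists_permute:
  assumes p: "p permutes {..<m}"
  shows "(\<Sum>u\<in>bounded_lists N m. g u) = (\<Sum>u\<in>bounded_lists N m. g (permute_list p u))"
proof (rule sum.reindex_bij_witness[where j = "permute_list (inv p)" and i = "permute_list p"])
  have p': "inv p permutes {..<m}"
    using permutes_inv[OF p] .
  fix u assume "u \<in> bounded_lists N m"
  then have u: "length u = m" "set u \<subseteq> {..N}"
    by (auto simp: bounded_lists_def)
  show "permute_list p (permute_list (inv p) u) = u" "permute_list (inv p) (permute_list p u) = u"
    using u p p' by (simp_all add: permute_list_compose [symmetric] permutes_inv_o)
  then show "g (permute_list p (permute_list (inv p) u)) = g u"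
    by simp
  show "permute_list (inv p) u \<in> bounded_lists N m" "permute_list p u \<in> bounded_lists N m"
    using u p p' by (simp_all add: bounded_lists_def)
qed

definition list_weight :: "nat \<Rightarrow> nat list \<Rightarrow> real" where
  "list_weight N u = (if sum_list u = N then (\<Prod>x\<leftarrow>u. catalan_weight x) else 0)"

lemma list_weight_mset_eq: "mset u = mset v \<Longrightarrow> list_weight N u = list_weight N v"
  unfolding list_weight_def by (metis mset_map prod_mset_prod_list sum_mset_sum_list)

lemma list_weight_nonzero:
  assumes "list_weight N u \<noteq> 0"
  shows "sum_list u = N" "\<forall>x\<in>set u. odd x"
  using assms catalan_weight_even by (auto simp: list_weight_def prod_list_zero_iff image_iff split: if_splits)

definition arrangement_weight :: "nat \<Rightarrow> nat multiset \<Rightarrow> nat list \<Rightarrow> real" where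
  "arrangement_weight N M u = (if mset u = M then list_weight N u else 0)"

lemma arrangement_weight_permute_list:
  "p permutes {..<length u} \<Longrightarrow> arrangement_weight N M (permute_list p u) = arrangement_weight N M u"
  using list_weight_mset_eq[of "permute_list p u" u N] by (simp add: arrangement_weight_def mset_permute_list)

definition config_weight :: "nat \<Rightarrow> nat \<Rightarrow> nat multiset \<Rightarrow> real" where
  "config_weight N m M = (\<Sum>u\<in>bounded_lists N m. arrangement_weight N M u)"

lemma sum_list_weight_jump_rate_symmetric:
  assumes "(i, j, k) \<in> index_triples m"
  shows "(\<Sum>u\<in>bounded_lists N m. list_weight N u * jump_rate u M' (i, j, k))
    = (\<Sum>u\<in>bounded_lists N m. list_weight N u * jump_rate u M' (m - 3, m - 2, m - 1))"
proof -
  have ijk: "i < j" "j < k" "k < m"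
    using assms by (auto simp: index_triples_def)
  define p where "p = Transposition.transpose (m - 1) k \<circ> Transposition.transpose (m - 2) j
    \<circ> Transposition.transpose (m - 3) i"
  have p: "p permutes {..<m}"
    unfolding p_def using ijk by (intro permutes_compose permutes_swap_id) auto
  have p_last: "p (m - 3) = i" "p (m - 2) = j" "p (m - 1) = k"
    unfolding p_def using ijk by (auto simp: transpose_def)
  have "(\<Sum>u\<in>bounded_lists N m. list_weight N u * jump_rate u M' (m - 3, m - 2, m - 1))
      = (\<Sum>u\<in>bounded_lists N m. list_weight N (permute_list p u) * jump_rate (permute_list p u) M' (m - 3, m - 2, m - 1))"
    by (rule sum_bounded_lists_permute[OF p])
  also have "\<dots> = (\<Sum>u\<in>bounded_lists N m. list_weight N u * jump_rate u M' (i, j, k))"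
  proof (rule sum.cong [OF refl])
    fix u assume "u \<in> bounded_lists N m"
    then have "length u = m"
      by (simp add: bounded_lists_def)
    then show "list_weight N (permute_list p u) * jump_rate (permute_list p u) M' (m - 3, m - 2, m - 1)
        = list_weight N u * jump_rate u M' (i, j, k)"
      using p ijk p_last list_weight_mset_eq[OF mset_permute_list, of p u N]
      by (simp add: jump_rate_permute_list)
  qed
  finally show ?thesis ..
qed

lemma sum_list_weight_transition_rate_last_triple:
  "(\<Sum>u\<in>bounded_lists N m. list_weight N u * transition_rate u M')
    = real (card (index_triples m)) * (\<Sum>u\<in>bounded_lists N m. list_weight N u * jump_rate u M' (m - 3, m - 2, m - 1))"
proof -
  have "(\<Sum>u\<in>bounded_lists N m. list_weight N u * transition_rate u M')
      = (\<Sum>t\<in>index_triples m. \<Sum>u\<in>bounded_lists N m. list_weight N u * jump_rate u M' t)"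
    unfolding transition_rate_def sum_distrib_left
    by (subst sum.swap) (intro sum.cong; simp add: bounded_lists_def)
  also have "\<dots> = (\<Sum>t\<in>index_triples m. \<Sum>u\<in>bounded_lists N m. list_weight N u * jump_rate u M' (m - 3, m - 2, m - 1))"
  proof (rule sum.cong [OF refl])
    fix t assume "t \<in> index_triples m"
    then show "(\<Sum>u\<in>bounded_lists N m. list_weight N u * jump_rate u M' t)
        = (\<Sum>u\<in>bounded_lists N m. list_weight N u * jump_rate u M' (m - 3, m - 2, m - 1))"
      using sum_list_weight_jump_rate_symmetric by (cases t) blast
  qed
  finally show ?thesis
    by simp
qed

definition residual_weight :: "nat \<Rightarrow> nat multiset \<Rightarrow> nat list \<Rightarrow> nat \<Rightarrow> real" where
  "residual_weight N M' v x =
    (if sum_list v + x = N \<and> add_mset x (mset v) = M' then (\<Prod>y\<leftarrow>v. catalan_weight y) else 0)"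

lemma list_weight_jump_rate_append:
  assumes "length v = k"
  shows "list_weight N (v @ [a, b, c]) * jump_rate (v @ [a, b, c]) M' (k, Suc k, Suc (Suc k))
    = residual_weight N M' v (a + b + c) * (real (a + b + c) + 3)
      * (catalan_weight a * catalan_weight b * catalan_weight c)"
proof -
  have "(v @ [a, b, c]) ! k = a" "(v @ [a, b, c]) ! Suc k = b" "(v @ [a, b, c]) ! Suc (Suc k) = c"
    using assms by (auto simp: nth_append)
  then show ?thesis
    by (simp add: jump_rate_def merge_triple_def triple_rate_def list_weight_def residual_weight_def
        algebra_simps)
qed

lemma sum_cube_if_sum_eq:
  fixes G :: "nat \<Rightarrow> nat \<Rightarrow> nat \<Rightarrow> real"
  assumes "x \<le> N"
  shows "(\<Sum>a\<le>N. \<Sum>b\<le>N. \<Sum>c\<le>N. if x = a + b + c then G a b c else 0)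
    = (\<Sum>a\<le>x. \<Sum>b\<le>x - a. G a b (x - a - b))"
proof -
  have "(\<Sum>c\<le>N. if x = a + b + c then G a b c else 0) = (if a + b \<le> x then G a b (x - a - b) else 0)" for a b
  proof -
    have "(\<Sum>c\<le>N. if x = a + b + c then G a b c else 0)
        = (\<Sum>c\<le>N. if c = x - a - b \<and> a + b \<le> x then G a b c else 0)"
      by (rule sum.cong) auto
    then show ?thesis
      using assms by (cases "a + b \<le> x") (auto simp: sum.delta')
  qed
  moreover have "(\<Sum>b\<le>N. if a + b \<le> x then G a b (x - a - b) else 0)
      = (if a \<le> x then (\<Sum>b\<le>x - a. G a b (x - a - b)) else 0)" for a
  proof -
    have "{b \<in> {..N}. a + b \<le> x} = (if a \<le> x then {..x - a} else {})"
      using assms by auto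
    then show ?thesis
      by (simp add: sum.inter_filter [symmetric])
  qed
  moreover have "{a \<in> {..N}. a \<le> x} = {..x}"
    using assms by auto
  ultimately show ?thesis
    by (simp add: sum.inter_filter [symmetric])
qed

lemma sum_cube_by_total:
  fixes F \<phi> :: "nat \<Rightarrow> real"
  assumes "\<And>x. N < x \<Longrightarrow> \<phi> x = 0"
  shows "(\<Sum>a\<le>N. \<Sum>b\<le>N. \<Sum>c\<le>N. \<phi> (a + b + c) * (F a * F b * F c))
    = (\<Sum>x\<le>N. \<phi> x * (\<Sum>a\<le>x. F a * (\<Sum>b\<le>x - a. F b * F (x - a - b))))"
proof -
  define T where "T a b c x = (if x = a + b + c then \<phi> x * (F a * F b * F c) else 0)" for a b c x
  have "\<phi> (a + b + c) * (F a * F b * F c) = (\<Sum>x\<le>N. T a b c x)" for a b c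
    using assms[of "a + b + c"] by (cases "a + b + c \<le> N") (auto simp: T_def sum.delta)
  then have "(\<Sum>a\<le>N. \<Sum>b\<le>N. \<Sum>c\<le>N. \<phi> (a + b + c) * (F a * F b * F c))
      = (\<Sum>a\<le>N. \<Sum>b\<le>N. \<Sum>c\<le>N. \<Sum>x\<le>N. T a b c x)"
    by simp
  also have "\<dots> = (\<Sum>a\<le>N. \<Sum>b\<le>N. \<Sum>x\<le>N. \<Sum>c\<le>N. T a b c x)"
    by (rule sum.cong [OF refl], rule sum.cong [OF refl], rule sum.swap)
  also have "\<dots> = (\<Sum>a\<le>N. \<Sum>x\<le>N. \<Sum>b\<le>N. \<Sum>c\<le>N. T a b c x)"
    by (rule sum.cong [OF refl], rule sum.swap)
  also have "\<dots> = (\<Sum>x\<le>N. \<Sum>a\<le>N. \<Sum>b\<le>N. \<Sum>c\<le>N. T a b c x)"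
    by (rule sum.swap)
  also have "\<dots> = (\<Sum>x\<le>N. \<phi> x * (\<Sum>a\<le>x. F a * (\<Sum>b\<le>x - a. F b * F (x - a - b))))"
    unfolding T_def
    by (intro sum.cong refl) (simp add: sum_cube_if_sum_eq sum_distrib_left mult_ac)
  finally show ?thesis .
qed

lemma sum_residual_weight_merge:
  "(\<Sum>a\<le>N. \<Sum>b\<le>N. \<Sum>c\<le>N. residual_weight N M' v (a + b + c) * (real (a + b + c) + 3)
       * (catalan_weight a * catalan_weight b * catalan_weight c))
    = (\<Sum>x\<le>N. residual_weight N M' v x * (3 * (real x - 1) * catalan_weight x))"
proof -
  have "(\<Sum>a\<le>N. \<Sum>b\<le>N. \<Sum>c\<le>N. residual_weight N M' v (a + b + c) * (real (a + b + c) + 3)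
       * (catalan_weight a * catalan_weight b * catalan_weight c))
      = (\<Sum>x\<le>N. residual_weight N M' v x * (real x + 3)
          * (\<Sum>a\<le>x. catalan_weight a * (\<Sum>b\<le>x - a. catalan_weight b * catalan_weight (x - a - b))))"
    by (rule sum_cube_by_total) (simp add: residual_weight_def)
  also have "\<dots> = (\<Sum>x\<le>N. residual_weight N M' v x * (3 * (real x - 1) * catalan_weight x))"
    by (simp only: mult.assoc catalan_weight_triple_convolution)
  finally show ?thesis .
qed

lemma sum_list_weight_jump_rate_last:
  "(\<Sum>u\<in>bounded_lists N (Suc (Suc (Suc k))). list_weight N u * jump_rate u M' (k, Suc k, Suc (Suc k)))
    = (\<Sum>w\<in>bounded_lists N (Suc k). arrangement_weight N M' w * (3 * (real (w ! k) - 1)))"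
proof -
  have "(\<Sum>u\<in>bounded_lists N (Suc (Suc (Suc k))). list_weight N u * jump_rate u M' (k, Suc k, Suc (Suc k)))
      = (\<Sum>v\<in>bounded_lists N k. \<Sum>a\<le>N. \<Sum>b\<le>N. \<Sum>c\<le>N. residual_weight N M' v (a + b + c)
          * (real (a + b + c) + 3) * (catalan_weight a * catalan_weight b * catalan_weight c))"
    unfolding sum_bounded_lists_Suc
    by (intro sum.cong refl) (simp add: list_weight_jump_rate_append bounded_lists_def)
  also have "\<dots> = (\<Sum>v\<in>bounded_lists N k. \<Sum>x\<le>N. residual_weight N M' v x * (3 * (real x - 1) * catalan_weight x))"
    by (simp only: sum_residual_weight_merge)
  also have "\<dots> = (\<Sum>w\<in>bounded_lists N (Suc k). arrangement_weight N M' w * (3 * (real (w ! k) - 1)))"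
    unfolding sum_bounded_lists_Suc
    by (intro sum.cong refl)
      (auto simp: residual_weight_def arrangement_weight_def list_weight_def bounded_lists_def nth_append)
  finally show ?thesis .
qed

lemma sum_bounded_lists_last_symmetric:
  fixes g :: "nat \<Rightarrow> real"
  assumes "0 < m"
    and Q: "\<And>w p. w \<in> bounded_lists N m \<Longrightarrow> p permutes {..<m} \<Longrightarrow> Q (permute_list p w) = Q w"
  shows "real m * (\<Sum>w\<in>bounded_lists N m. Q w * g (w ! (m - 1)))
    = (\<Sum>w\<in>bounded_lists N m. Q w * (\<Sum>i<m. g (w ! i)))"
proof -
  have each: "(\<Sum>w\<in>bounded_lists N m. Q w * g (w ! (m - 1))) = (\<Sum>w\<in>bounded_lists N m. Q w * g (w ! i))"
    if "i < m" for i
  proof -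
    define p where "p = Transposition.transpose i (m - 1)"
    have p: "p permutes {..<m}"
      unfolding p_def using that \<open>0 < m\<close> by (intro permutes_swap_id) auto
    have "(\<Sum>w\<in>bounded_lists N m. Q w * g (w ! (m - 1)))
        = (\<Sum>w\<in>bounded_lists N m. Q (permute_list p w) * g (permute_list p w ! (m - 1)))"
      by (rule sum_bounded_lists_permute[OF p])
    also have "\<dots> = (\<Sum>w\<in>bounded_lists N m. Q w * g (w ! i))"
    proof (rule sum.cong [OF refl])
      fix w assume w: "w \<in> bounded_lists N m"
      then have "permute_list p w ! (m - 1) = w ! i"
        using p \<open>0 < m\<close> by (simp add: bounded_lists_def permute_list_nth p_def)
      then show "Q (permute_list p w) * g (permute_list p w ! (m - 1)) = Q w * g (w ! i)"
        using Q[OF w p] by simp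
    qed
    finally show ?thesis .
  qed
  have "real m * (\<Sum>w\<in>bounded_lists N m. Q w * g (w ! (m - 1)))
      = (\<Sum>i<m. \<Sum>w\<in>bounded_lists N m. Q w * g (w ! (m - 1)))"
    by simp
  also have "\<dots> = (\<Sum>i<m. \<Sum>w\<in>bounded_lists N m. Q w * g (w ! i))"
    by (rule sum.cong [OF refl]) (rule each; simp)
  also have "\<dots> = (\<Sum>w\<in>bounded_lists N m. Q w * (\<Sum>i<m. g (w ! i)))"
    by (subst sum.swap) (simp add: sum_distrib_left)
  finally show ?thesis .
qed

lemma sum_config_weight_last:
  "real (Suc k) * (\<Sum>w\<in>bounded_lists N (Suc k). arrangement_weight N M' w * (3 * (real (w ! k) - 1)))
    = 3 * (real N - real (Suc k)) * config_weight N (Suc k) M'"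
proof -
  have "real (Suc k) * (\<Sum>w\<in>bounded_lists N (Suc k). arrangement_weight N M' w * (3 * (real (w ! k) - 1)))
      = (\<Sum>w\<in>bounded_lists N (Suc k). arrangement_weight N M' w * (\<Sum>i<Suc k. 3 * (real (w ! i) - 1)))"
    by (rule sum_bounded_lists_last_symmetric [of "Suc k", unfolded diff_Suc_1])
      (simp_all add: bounded_lists_def arrangement_weight_permute_list)
  also have "\<dots> = (\<Sum>w\<in>bounded_lists N (Suc k). arrangement_weight N M' w * (3 * (real N - real (Suc k))))"
  proof (rule sum.cong [OF refl])
    fix w assume "w \<in> bounded_lists N (Suc k)"
    then have "(\<Sum>i<Suc k. 3 * (real (w ! i) - 1)) = 3 * (real (sum_list w) - real (Suc k))"
      by (simp add: bounded_lists_def sum_list_sum_nth atLeast0LessThan sum_subtractf sum_distrib_left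
          del: of_nat_Suc)
    then show "arrangement_weight N M' w * (\<Sum>i<Suc k. 3 * (real (w ! i) - 1))
        = arrangement_weight N M' w * (3 * (real N - real (Suc k)))"
      using list_weight_nonzero(1)[of N w] by (auto simp: arrangement_weight_def)
  qed
  also have "\<dots> = 3 * (real N - real (Suc k)) * config_weight N (Suc k) M'"
    by (simp add: config_weight_def sum_distrib_right mult.commute)
  finally show ?thesis .
qed

lemma sum_list_weight_transition_rate:
  assumes "3 \<le> m"
  shows "(\<Sum>u\<in>bounded_lists N m. list_weight N u * transition_rate u M')
    = real m * (real m - 1) * (real N - real m + 2) / 2 * config_weight N (m - 2) M'"
proof -
  define k where "k = m - 3"
  have m: "m = Suc (Suc (Suc k))" "m - 2 = Suc k"
    using assms by (auto simp: k_def)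
  have "(\<Sum>u\<in>bounded_lists N m. list_weight N u * transition_rate u M')
      = real (card (index_triples m))
        * (\<Sum>w\<in>bounded_lists N (Suc k). arrangement_weight N M' w * (3 * (real (w ! k) - 1)))"
    unfolding sum_list_weight_transition_rate_last_triple using sum_list_weight_jump_rate_last m by simp
  also have "\<dots> = real m * (real m - 1) / 6
      * (real (Suc k) * (\<Sum>w\<in>bounded_lists N (Suc k). arrangement_weight N M' w * (3 * (real (w ! k) - 1))))"
    unfolding card_index_triples using m by simp
  also have "\<dots> = real m * (real m - 1) * (real N - real m + 2) / 2 * config_weight N (m - 2) M'"
    unfolding sum_config_weight_last using m by (simp add: field_simps)
  finally show ?thesis .
qed

lemma pmf_ternary_step_mset:
  assumes "3 \<le> length u"
  shows "pmf (ternary_step (mset u)) M' = transition_rate u M' / total_rate u"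
proof -
  define xs where "xs = sorted_list_of_multiset (mset u)"
  have xs: "mset xs = mset u"
    by (simp add: xs_def)
  then have "length xs = length u" "sum_list xs = sum_list u"
    by (metis size_mset, metis sum_mset_sum_list)
  then have "total_rate xs = total_rate u"
    by (simp add: total_rate_eq)
  moreover have "transition_rate xs M' = transition_rate u M'"
    by (rule transition_rate_mset_eq[OF xs])
  ultimately show ?thesis
    using pmf_ternary_step[of "mset u" M'] assms unfolding xs_def by simp
qed

lemma expectation_config_weight:
  fixes f :: "nat multiset \<Rightarrow> real"
  assumes p: "\<And>K. pmf p K = c * config_weight N m K"
  shows "measure_pmf.expectation p f = c * (\<Sum>u\<in>bounded_lists N m. list_weight N u * f (mset u))"
proof -
  define A where "A = mset ` bounded_lists N m"
  have "finite A"
    by (simp add: A_def)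
  have "measure_pmf.expectation p f = (\<Sum>K\<in>A. pmf p K *\<^sub>R f K)"
  proof (rule integral_measure_pmf[OF \<open>finite A\<close>])
    fix K assume "K \<in> set_pmf p"
    then have "config_weight N m K \<noteq> 0"
      using p by (simp add: set_pmf_eq)
    then obtain u where "u \<in> bounded_lists N m" "arrangement_weight N K u \<noteq> 0"
      unfolding config_weight_def by (rule sum.not_neutral_contains_not_neutral)
    then show "K \<in> A"
      unfolding A_def by (auto simp: arrangement_weight_def split: if_splits)
  qed
  also have "\<dots> = (\<Sum>K\<in>A. \<Sum>u\<in>bounded_lists N m. if mset u = K then c * (list_weight N u * f K) else 0)"
    unfolding p config_weight_def arrangement_weight_def sum_distrib_left
    by (auto simp: sum_distrib_right intro!: sum.cong)
  also have "\<dots> = (\<Sum>u\<in>bounded_lists N m. \<Sum>K\<in>A. if mset u = K then c * (list_weight N u * f K) else 0)"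
    by (rule sum.swap)
  also have "\<dots> = c * (\<Sum>u\<in>bounded_lists N m. list_weight N u * f (mset u))"
    unfolding sum_distrib_left
    by (intro sum.cong refl) (simp add: A_def sum.delta)
  finally show ?thesis .
qed

lemma replicate_one_if_sum_list_eq_length:
  fixes u :: "nat list"
  assumes "\<forall>x\<in>set u. 0 < x" and "sum_list u = length u"
  shows "u = replicate (length u) 1"
  using assms
proof (induction u)
  case (Cons x u)
  have "length u \<le> sum_list u"
    using Cons.prems(1) by (induction u) auto
  then show ?case
    using Cons by auto
qed simp

lemma config_weight_initial: "config_weight N N M = (if M = replicate_mset N 1 then 1 else 0)"
proof -
  have "arrangement_weight N M u = (if u = replicate N 1 then (if mset u = M then 1 else 0) else 0)"
    if "u \<in> bounded_lists N N" for u
  proof (cases "list_weight N u = 0")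
    case False
    then have "sum_list u = N" "\<forall>x\<in>set u. 0 < x"
      using list_weight_nonzero[of N u] by (auto intro: odd_pos)
    then have "u = replicate N 1"
      using that replicate_one_if_sum_list_eq_length[of u] by (simp add: bounded_lists_def)
    then show ?thesis
      by (simp add: arrangement_weight_def list_weight_def sum_list_replicate)
  qed (auto simp: arrangement_weight_def list_weight_def sum_list_replicate)
  moreover have "replicate N 1 \<in> bounded_lists N N"
    by (auto simp: bounded_lists_def)
  ultimately show ?thesis
    unfolding config_weight_def by (simp add: sum.delta' del: One_nat_def)
qed

definition skeleton_norm :: "nat \<Rightarrow> nat \<Rightarrow> real" where
  "skeleton_norm N l = real N / (real (N - 2 * l) * real (N choose l))"

lemma skeleton_norm_Suc:
  assumes "2 * l + 3 \<le> N"
  defines "m \<equiv> N - 2 * l"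
  shows "skeleton_norm N l * (real m * (real m - 1) * (real N - real m + 2) / 2)
      / ((real m - 1) * (real m - 2) * (real m + real N) / 2)
    = skeleton_norm N (Suc l)"
proof -
  have m: "real m = real N - 2 * real l" "real (N - 2 * Suc l) = real m - 2"
    using assms by (simp_all add: of_nat_diff)
  have "Suc l * (N choose Suc l) = (N - l) * (N choose l)"
    using Suc_times_binomial[of l "N - 1"] binomial_absorb_comp[of N l] assms by simp
  then have "real (Suc l) * real (N choose Suc l) = real (N - l) * real (N choose l)"
    by (metis of_nat_mult)
  then have "real (N choose Suc l) = (real N - real l) * real (N choose l) / (real l + 1)"
    using assms by (simp add: of_nat_diff eq_divide_eq algebra_simps)
  moreover have "real (N choose l) \<noteq> 0" "real m - 1 \<noteq> 0" "real m - 2 \<noteq> 0" "real m \<noteq> 0"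
      "real m + real N \<noteq> 0" "real N - real l \<noteq> 0" "real l + 1 \<noteq> 0"
    using assms m by (auto simp: zero_less_binomial_iff)
  ultimately show ?thesis
    unfolding skeleton_norm_def m(2) m_def[symmetric] using m(1)
    by (simp add: divide_simps) algebra
qed

lemma pmf_skeleton_chain:
  assumes "2 * l < N"
  shows "pmf (skeleton_chain N l) M = skeleton_norm N l * config_weight N (N - 2 * l) M"
  using assms
proof (induction l arbitrary: M)
  case 0
  then show ?case
    by (simp add: skeleton_norm_def config_weight_initial)
next
  case (Suc l)
  define m where "m = N - 2 * l"
  define R where "R = (real m - 1) * (real m - 2) * (real m + real N) / 2"
  have "3 \<le> m"
    using Suc.prems by (simp add: m_def)
  have step: "list_weight N u * pmf (ternary_step (mset u)) M = list_weight N u * transition_rate u M / R"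
    if "u \<in> bounded_lists N m" for u
  proof (cases "list_weight N u = 0")
    case False
    then have "sum_list u = N"
      by (rule list_weight_nonzero)
    then show ?thesis
      using that \<open>3 \<le> m\<close> by (simp add: bounded_lists_def pmf_ternary_step_mset total_rate_eq R_def)
  qed simp
  have "pmf (skeleton_chain N (Suc l)) M = measure_pmf.expectation (skeleton_chain N l) (\<lambda>K. pmf (ternary_step K) M)"
    by (simp add: pmf_bind)
  also have "\<dots> = skeleton_norm N l * (\<Sum>u\<in>bounded_lists N m. list_weight N u * pmf (ternary_step (mset u)) M)"
    using Suc by (intro expectation_config_weight) (simp add: m_def)
  also have "\<dots> = skeleton_norm N l / R * (\<Sum>u\<in>bounded_lists N m. list_weight N u * transition_rate u M)"
    by (simp add: step sum_divide_distrib [symmetric])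
  also have "\<dots> = skeleton_norm N l * (real m * (real m - 1) * (real N - real m + 2) / 2) / R
      * config_weight N (m - 2) M"
    unfolding sum_list_weight_transition_rate[OF \<open>3 \<le> m\<close>] by simp
  also have "skeleton_norm N l * (real m * (real m - 1) * (real N - real m + 2) / 2) / R = skeleton_norm N (Suc l)"
    unfolding R_def m_def using skeleton_norm_Suc[of l N] Suc.prems by simp
  finally show ?case
    by (simp add: m_def)
qed

lemma config_weight_mset:
  assumes "length s = m" and "sum_list s = N"
  shows "config_weight N m (mset s) = real (card (permutations_of_multiset (mset s))) * list_weight N s"
proof -
  have "set s \<subseteq> {..N}"
    using assms(2) member_le_sum_list[of _ s] by auto
  then have perms: "{u \<in> bounded_lists N m. mset u = mset s} = permutations_of_multiset (mset s)"
    using assms(1) by (auto simp: bounded_lists_def permutations_of_multiset_def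
        dest: mset_eq_length mset_eq_setD)
  have "config_weight N m (mset s) = (\<Sum>u\<in>bounded_lists N m. if mset u = mset s then list_weight N s else 0)"
    unfolding config_weight_def arrangement_weight_def by (intro sum.cong refl) (auto intro: list_weight_mset_eq)
  also have "\<dots> = real (card (permutations_of_multiset (mset s))) * list_weight N s"
    by (simp add: sum.inter_filter [symmetric] perms)
  finally show ?thesis .
qed

lemma card_permutations_of_multiset_mset: "real (card (permutations_of_multiset (mset s))) = gamma_coef s"
proof -
  have "real (card (permutations_of_multiset (mset s)))
      = real (fact (size (mset s))) / real (\<Prod>x\<in>set_mset (mset s). fact (count (mset s) x))"
    unfolding card_permutations_of_multiset(1) by (rule real_of_nat_div[OF card_permutations_of_multiset(2)])
  then show ?thesis
    by (simp add: gamma_coef_def count_mset of_nat_prod)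
qed

lemma list_weight_odd:
  assumes "sum_list s = N" and "\<forall>x\<in>set s. odd x"
  shows "list_weight N s = (\<Prod>i<length s. 1 / real (s ! i) * real (s ! i choose ((s ! i + 1) div 2)))"
proof -
  have "list_weight N s = (\<Prod>i<length s. catalan_weight (s ! i))"
    using assms(1) by (simp add: list_weight_def prod.list_conv_set_nth atLeast0LessThan)
  also have "\<dots> = (\<Prod>i<length s. 1 / real (s ! i) * real (s ! i choose ((s ! i + 1) div 2)))"
    using assms(2) by (intro prod.cong refl) (simp add: catalan_weight_def)
  finally show ?thesis .
qed

theorem corollary2p5:
  fixes n l :: nat and s :: "nat list"
  defines "N \<equiv> 2 * n + 1"
  assumes "l \<le> n"
    and "sorted_wrt (\<ge>) s"
    and "length s = N - 2 * l"
    and "\<forall>x\<in>set s. odd x \<and> x > 0"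
    and "sum_list s = N"
  shows "pmf (skeleton_chain N l) (mset s) =
           gamma_coef s * (real N / real (N - 2 * l)) * inverse (real (N choose l)) *
           (\<Prod>i<N - 2 * l. (1 / real (s ! i)) * real (s ! i choose ((s ! i + 1) div 2)))"
proof -
  have "2 * l < N"
    using assms(2) by (simp add: N_def)
  then have "pmf (skeleton_chain N l) (mset s) = skeleton_norm N l * config_weight N (N - 2 * l) (mset s)"
    by (rule pmf_skeleton_chain)
  also have "config_weight N (N - 2 * l) (mset s) = gamma_coef s * list_weight N s"
    using assms(4,6) by (simp add: config_weight_mset card_permutations_of_multiset_mset)
  also have "list_weight N s = (\<Prod>i<N - 2 * l. (1 / real (s ! i)) * real (s ! i choose ((s ! i + 1) div 2)))"
    using assms(4-6) by (simp add: list_weight_odd)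
  finally show ?thesis
    by (simp add: skeleton_norm_def divide_inverse mult_ac)
qed

end
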